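(* Let $G$ be any finite forest (acyclic graph) with vertex set $[n]=\{1,\ldots,n\}$, let $H\subseteq[n]$ be arbitrary, and let $p\in(0,1)$. Then for all $u,v\in[n]$, \[ \mathbb{P}_{H,p}^G\big(u^+\leftrightarrow v^+\big)\ge \mathbb{P}_{H,p}^G\big(u^+\leftrightarrow v^-\big). \]
   Context: Bunkbed setup: for a finite graph $G$ with vertex labels $[n]$, take two copies $G^+$ and $G^-$, with vertex sets $[n]^+=\{1^+,\ldots,n^+\}$ and $[n]^-=\{1^-,\ldots,n^-\}$ and edge sets $E^+$ and $E^-$ (the copies of the edges of $G$). Given $H\subseteq[n]$, form the graph $G^\pm$ with vertex set $[n]^+\cup[n]^-$ and edge set $E^+\cup E^-\cup\{\{v^+,v^-\}: v\in H\}$. $\mathbb{P}^G_{H,p}$ is the law under which each edge of $E^+\cup E^-$ is open independently with probability $p$, and every edge $\{v^+,v^-\}$ with $v\in H$ is always open. The event $\{x\leftrightarrow y\}$ means there is a path of open edges from $x$ to $y$ in $G^\pm$. *)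

theory Defs
  imports Complex_Main
begin

definition simple_graph_on :: "nat \<Rightarrow> nat set set \<Rightarrow> bool" where
  "simple_graph_on n E \<longleftrightarrow> (\<forall>e\<in>E. e \<subseteq> {1..n} \<and> card e = 2)"

definition is_cycle :: "nat set set \<Rightarrow> nat list \<Rightarrow> bool" where
  "is_cycle E vs \<longleftrightarrow> length vs \<ge> 3 \<and> distinct vs \<and>
     (\<forall>i. Suc i < length vs \<longrightarrow> {vs ! i, vs ! Suc i} \<in> E) \<and>
     {last vs, hd vs} \<in> E"

definition forest_on :: "nat \<Rightarrow> nat set set \<Rightarrow> bool" where
  "forest_on n E \<longleftrightarrow> simple_graph_on n E \<and> (\<nexists>vs. is_cycle E vs)"

text \<open>Vertices of the bunkbed graph are pairs (v, b); b = True is the copy v^+, b = False is v^-.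
  An edge configuration S is a set of open edges of E^+ \<union> E^-, where (e, b) denotes the copy of e
  in layer b. Posts {v^+, v^-} for v \<in> H are always open.\<close>
definition bb_adj :: "nat set \<Rightarrow> (nat set \<times> bool) set \<Rightarrow> (nat \<times> bool) \<Rightarrow> (nat \<times> bool) \<Rightarrow> bool" where
  "bb_adj H S x y \<longleftrightarrow>
     (snd x = snd y \<and> fst x \<noteq> fst y \<and> ({fst x, fst y}, snd x) \<in> S) \<or>
     (fst x = fst y \<and> fst x \<in> H \<and> snd x \<noteq> snd y)"

definition bb_connected :: "nat set \<Rightarrow> (nat set \<times> bool) set \<Rightarrow> (nat \<times> bool) \<Rightarrow> (nat \<times> bool) \<Rightarrow> bool" where
  "bb_connected H S x y \<longleftrightarrow> (bb_adj H S)\<^sup>*\<^sup>* x y"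

text \<open>P^G_{H,p}(x <-> y): each of the edges of E^+ \<union> E^- open independently with probability p.\<close>
definition bb_prob :: "nat set set \<Rightarrow> nat set \<Rightarrow> real \<Rightarrow> (nat \<times> bool) \<Rightarrow> (nat \<times> bool) \<Rightarrow> real" where
  "bb_prob E H p x y =
     (\<Sum>S\<in>Pow (E \<times> (UNIV::bool set)).
        (if bb_connected H S x y then p ^ card S * (1 - p) ^ (card (E \<times> (UNIV::bool set)) - card S) else 0))"

end

theory Submission
  imports Defs
begin

text \<open>
  Induction on the number of edges. A forest with an edge has two leaves (the ends of a longest
  path), so there is a leaf l \<noteq> u; let {l, w} be its edge and condition on its two copies.
  If l \<noteq> v and at most one copy is open, the fibre {l^+, l^-} is a dead end and can be deleted;
  if both copies are open, its only effect is the detour w^+ l^+ l^- w^-, available iff l \<in> H,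
  which is a post at w. So both probabilities are the same convex combination of the
  corresponding probabilities for the smaller forest with posts H or H \<union> {w}.
  If l = v \<notin> H, then v^b is reached exactly through w^b and the copy of {v, w} in layer b,
  so both sides scale by p. If v \<in> H, then v^+ and v^- are joined by a post.
\<close>

section \<open>Random subsets\<close>

definition random_subset_prob :: "'a set \<Rightarrow> real \<Rightarrow> ('a set \<Rightarrow> bool) \<Rightarrow> real" where
  "random_subset_prob \<Omega> p A =
     (\<Sum>S\<in>Pow \<Omega>. if A S then p ^ card S * (1 - p) ^ (card \<Omega> - card S) else 0)"

lemma random_subset_prob_cong:
  assumes "\<And>S. S \<subseteq> \<Omega> \<Longrightarrow> A S \<longleftrightarrow> B S"
  shows "random_subset_prob \<Omega> p A = random_subset_prob \<Omega> p B"
  unfolding random_subset_prob_def using assms by (intro sum.cong) auto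

lemma random_subset_prob_False [simp]: "random_subset_prob \<Omega> p (\<lambda>S. False) = 0"
  by (simp add: random_subset_prob_def)

lemma random_subset_prob_mono:
  assumes "\<And>S. S \<subseteq> \<Omega> \<Longrightarrow> A S \<Longrightarrow> B S" and "0 \<le> p" "p \<le> 1"
  shows "random_subset_prob \<Omega> p A \<le> random_subset_prob \<Omega> p B"
  unfolding random_subset_prob_def using assms by (intro sum_mono) auto

lemma random_subset_prob_insert:
  assumes "finite \<Omega>" "a \<notin> \<Omega>"
  shows "random_subset_prob (insert a \<Omega>) p A =
           (1 - p) * random_subset_prob \<Omega> p A + p * random_subset_prob \<Omega> p (\<lambda>S. A (insert a S))"
proof -
  define w where "w (S :: 'a set) = p ^ card S * (1 - p) ^ (card \<Omega> - card S)" for S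
  have weight_out: "p ^ card S * (1 - p) ^ (Suc (card \<Omega>) - card S) = (1 - p) * w S"
    and weight_in: "p ^ card (insert a S) * (1 - p) ^ (Suc (card \<Omega>) - card (insert a S)) = p * w S"
    if "S \<subseteq> \<Omega>" for S
  proof -
    have "finite S" "a \<notin> S" "card S \<le> card \<Omega>"
      using assms that by (auto intro: finite_subset card_mono)
    then show "p ^ card S * (1 - p) ^ (Suc (card \<Omega>) - card S) = (1 - p) * w S"
      and "p ^ card (insert a S) * (1 - p) ^ (Suc (card \<Omega>) - card (insert a S)) = p * w S"
      by (simp_all add: w_def Suc_diff_le)
  qed
  have inj: "inj_on (insert a) (Pow \<Omega>)"
    using assms(2) by (intro inj_onI) (metis PowD insert_ident subset_iff)
  have "random_subset_prob (insert a \<Omega>) p A =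
          (\<Sum>S\<in>Pow \<Omega>. if A S then (1 - p) * w S else 0)
        + (\<Sum>S\<in>Pow \<Omega>. if A (insert a S) then p * w S else 0)"
    unfolding random_subset_prob_def Pow_insert using assms
    by (subst sum.union_disjoint)
      (auto simp: sum.reindex[OF inj] weight_out weight_in intro!: arg_cong2[where f = "(+)"] sum.cong)
  then show ?thesis
    by (simp add: random_subset_prob_def w_def sum_distrib_left if_distrib cong: if_cong)
qed

lemma random_subset_prob_insert2:
  assumes "finite \<Omega>" "a \<notin> \<Omega>" "b \<notin> \<Omega>" "a \<noteq> b"
  shows "random_subset_prob (insert a (insert b \<Omega>)) p A =
           (1 - p)^2 * random_subset_prob \<Omega> p A
         + p * (1 - p) * random_subset_prob \<Omega> p (\<lambda>S. A (insert a S))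
         + p * (1 - p) * random_subset_prob \<Omega> p (\<lambda>S. A (insert b S))
         + p^2 * random_subset_prob \<Omega> p (\<lambda>S. A (insert a (insert b S)))"
  using assms by (simp add: random_subset_prob_insert power2_eq_square algebra_simps)

lemma random_subset_prob_edge_copies:
  assumes "finite E" "e \<in> E"
  shows "random_subset_prob (E \<times> UNIV) p A =
           (1 - p)^2 * random_subset_prob ((E - {e}) \<times> UNIV) p A
         + p * (1 - p) * random_subset_prob ((E - {e}) \<times> UNIV) p (\<lambda>S. A (insert (e, True) S))
         + p * (1 - p) * random_subset_prob ((E - {e}) \<times> UNIV) p (\<lambda>S. A (insert (e, False) S))
         + p^2 * random_subset_prob ((E - {e}) \<times> UNIV) p (\<lambda>S. A (insert (e, True) (insert (e, False) S)))"
proof -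
  have "E \<times> UNIV = insert (e, True) (insert (e, False) ((E - {e}) \<times> UNIV))"
    using assms(2) by (auto simp: UNIV_bool)
  then show ?thesis
    using assms(1) by (simp add: random_subset_prob_insert2)
qed

section \<open>Walks avoiding a set of vertices\<close>

lemma rtranclp_bypass_excursions:
  assumes walk: "R\<^sup>*\<^sup>* x z" and "x \<notin> D" "z \<notin> D"
    and outside: "\<And>a b. a \<notin> D \<Longrightarrow> b \<notin> D \<Longrightarrow> R a b \<Longrightarrow> R'\<^sup>*\<^sup>* a b"
    and excursion: "\<And>a d d' b. a \<notin> D \<Longrightarrow> d \<in> D \<Longrightarrow> d' \<in> D \<Longrightarrow> b \<notin> D \<Longrightarrow>
       R a d \<Longrightarrow> (\<lambda>s t. R s t \<and> s \<in> D \<and> t \<in> D)\<^sup>*\<^sup>* d d' \<Longrightarrow> R d' b \<Longrightarrow> R'\<^sup>*\<^sup>* a b"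
  shows "R'\<^sup>*\<^sup>* x z"
proof -
  let ?RD = "\<lambda>s t. R s t \<and> s \<in> D \<and> t \<in> D"
  have "(y \<notin> D \<longrightarrow> R'\<^sup>*\<^sup>* x y) \<and>
        (y \<in> D \<longrightarrow> (\<exists>a d. a \<notin> D \<and> d \<in> D \<and> R'\<^sup>*\<^sup>* x a \<and> R a d \<and> ?RD\<^sup>*\<^sup>* d y))"
    if "R\<^sup>*\<^sup>* x y" for y
    using that
  proof (induction rule: rtranclp_induct)
    case base
    then show ?case using \<open>x \<notin> D\<close> by simp
  next
    case (step y y')
    show ?case
    proof (cases "y \<in> D")
      case False
      then show ?thesis
        using step outside by (auto intro: rtranclp_trans)
    next
      case True
      then obtain a d where "a \<notin> D" "d \<in> D" "R'\<^sup>*\<^sup>* x a" "R a d" "?RD\<^sup>*\<^sup>* d y"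
        using step.IH by blast
      then show ?thesis
        using True step.hyps(2) excursion[of a d y y']
        by (auto intro: rtranclp_trans rtranclp.rtrancl_into_rtrancl)
    qed
  qed
  then show ?thesis
    using walk \<open>z \<notin> D\<close> by blast
qed

section \<open>Pendant edges of forests\<close>

definition pendant :: "nat set set \<Rightarrow> nat \<Rightarrow> nat \<Rightarrow> bool" where
  "pendant E l w \<longleftrightarrow> l \<noteq> w \<and> {l, w} \<in> E \<and> (\<forall>e\<in>E. l \<in> e \<longrightarrow> e = {l, w})"

definition is_path :: "nat set set \<Rightarrow> nat list \<Rightarrow> bool" where
  "is_path E vs \<longleftrightarrow> distinct vs \<and> successively (\<lambda>a b. {a, b} \<in> E) vs"

lemma is_cycle_iff_path: "is_cycle E vs \<longleftrightarrow> 3 \<le> length vs \<and> is_path E vs \<and> {last vs, hd vs} \<in> E"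
  unfolding is_cycle_def is_path_def successively_conv_nth by blast

lemma is_path_rev [simp]: "is_path E (rev vs) \<longleftrightarrow> is_path E vs"
proof -
  have sym: "(\<lambda>x y. {y, x} \<in> E) = (\<lambda>x y. {x, y} \<in> E)"
    by (intro ext) (simp add: insert_commute)
  show ?thesis
    by (simp only: is_path_def successively_rev distinct_rev sym)
qed

lemma set_path_subset_edges:
  assumes "successively (\<lambda>a b. {a, b} \<in> E) vs" "2 \<le> length vs"
  shows "set vs \<subseteq> \<Union>E"
  using assms
proof (induction vs rule: induct_list012)
  case (3 x y zs)
  then have "{x, y} \<in> E" "successively (\<lambda>a b. {a, b} \<in> E) (y # zs)"
    by simp_all
  moreover from this have "set (y # zs) \<subseteq> \<Union>E"
    using "3.IH"(2) by (cases zs) auto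
  ultimately show ?case
    by auto
qed simp_all

lemma simple_graph_edge_through:
  assumes "simple_graph_on n E" "e \<in> E" "x \<in> e"
  obtains z where "z \<noteq> x" "e = {x, z}"
proof -
  have "card e = 2"
    using assms(1,2) unfolding simple_graph_on_def by blast
  then obtain a b where ab: "e = {a, b}" "a \<noteq> b"
    unfolding card_2_iff by blast
  show ?thesis
  proof (cases "x = a")
    case True
    then show ?thesis
      using that[of b] ab by blast
  next
    case False
    then have "x = b"
      using ab assms(3) by blast
    then show ?thesis
      using that[of a] ab by (simp add: insert_commute)
  qed
qed

lemma longest_path_end_pendant:
  assumes forest: "forest_on n E" and path: "is_path E vs" "2 \<le> length vs"
    and longest: "\<And>ws. is_path E ws \<Longrightarrow> length ws \<le> length vs"
  shows "pendant E (last vs) (last (butlast vs))"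
proof -
  obtain zs x where "vs = zs @ [x]"
    using path(2) by (cases vs rule: rev_cases) auto
  moreover obtain ys y where "zs = ys @ [y]"
    using path(2) \<open>vs = zs @ [x]\<close> by (cases zs rule: rev_cases) auto
  ultimately have vs: "vs = ys @ [y, x]"
    by simp
  have "x \<noteq> y" "{x, y} \<in> E"
    using path(1) unfolding vs is_path_def by (auto simp: successively_append_iff insert_commute)
  moreover have "e = {x, y}" if e: "e \<in> E" "x \<in> e" for e
  proof (rule ccontr)
    assume "e \<noteq> {x, y}"
    have "simple_graph_on n E"
      using forest unfolding forest_on_def by blast
    then obtain z where z: "z \<noteq> x" "e = {x, z}"
      using e by (rule simple_graph_edge_through)
    with \<open>e \<noteq> {x, y}\<close> have "z \<noteq> y"
      by blast
    show False
    proof (cases "z \<in> set ys")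
      case False
      then have "is_path E (vs @ [z])"
        using path(1) z \<open>z \<noteq> y\<close> \<open>e \<in> E\<close> unfolding vs is_path_def
        by (auto simp: successively_append_iff)
      then show False
        using longest[of "vs @ [z]"] by simp
    next
      case True
      then obtain ys\<^sub>1 ys\<^sub>2 where "ys = ys\<^sub>1 @ z # ys\<^sub>2"
        by (meson split_list)
      then have "is_cycle E (z # ys\<^sub>2 @ [y, x])"
        using path(1) z \<open>e \<in> E\<close> unfolding is_cycle_iff_path vs is_path_def
        by (auto simp: successively_append_iff)
      then show False
        using forest unfolding forest_on_def by blast
    qed
  qed
  moreover have "last vs = x" "last (butlast vs) = y"
    unfolding vs by (simp_all add: butlast_append)
  ultimately show ?thesis
    unfolding pendant_def by blast
qed

lemma forest_finite: "forest_on n E \<Longrightarrow> finite E"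
  unfolding forest_on_def simple_graph_on_def
  by (rule finite_subset[of _ "Pow {1..n}"]) auto

lemma forest_subset: "forest_on n E \<Longrightarrow> E' \<subseteq> E \<Longrightarrow> forest_on n E'"
  unfolding forest_on_def simple_graph_on_def is_cycle_def by blast

lemma simple_graph_longest_path:
  assumes sg: "simple_graph_on n E" and "E \<noteq> {}"
  obtains vs where "is_path E vs" "2 \<le> length vs" "\<And>ws. is_path E ws \<Longrightarrow> length ws \<le> length vs"
proof -
  obtain e where "e \<in> E"
    using assms(2) by blast
  then have "card e = 2"
    using sg unfolding simple_graph_on_def by blast
  then obtain a b where "e = {a, b}" "a \<noteq> b"
    unfolding card_2_iff by blast
  then have "is_path E [a, b]"
    using \<open>e \<in> E\<close> unfolding is_path_def by simp
  have "length vs < Suc n" if "is_path E vs" "2 \<le> length vs" for vs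
  proof -
    have "set vs \<subseteq> {1..n}"
      using set_path_subset_edges[of E vs] that sg unfolding is_path_def simple_graph_on_def by blast
    then have "card (set vs) \<le> n"
      using card_mono[of "{1..n}" "set vs"] by simp
    then show ?thesis
      using that distinct_card[of vs] unfolding is_path_def by simp
  qed
  then obtain vs where vs: "is_path E vs" "2 \<le> length vs"
    and longest: "\<And>ws. is_path E ws \<and> 2 \<le> length ws \<Longrightarrow> length ws \<le> length vs"
    using ex_has_greatest_nat[of "\<lambda>vs. is_path E vs \<and> 2 \<le> length vs" "[a, b]" length "Suc n"]
      \<open>is_path E [a, b]\<close> by auto
  moreover have "length ws \<le> length vs" if "is_path E ws" for ws
    using that vs longest[of ws] by (cases "2 \<le> length ws") auto
  ultimately show ?thesis
    using that by blast
qed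

lemma forest_pendant_other_than:
  assumes forest: "forest_on n E" and "E \<noteq> {}"
  obtains l w where "pendant E l w" "l \<noteq> u"
proof -
  obtain vs where vs: "is_path E vs" "2 \<le> length vs"
    and longest: "\<And>ws. is_path E ws \<Longrightarrow> length ws \<le> length vs"
    using simple_graph_longest_path assms unfolding forest_on_def by blast
  then have "pendant E (last vs) (last (butlast vs))" "pendant E (hd vs) (hd (tl vs))"
    using longest_path_end_pendant[OF forest vs] longest_path_end_pendant[OF forest, of "rev vs"]
    by (simp_all add: last_rev butlast_rev)
  moreover have "hd vs \<noteq> last vs"
  proof -
    obtain a ws where "vs = a # ws" "ws \<noteq> []"
      using vs(2) by (cases vs) (auto simp: Suc_le_eq)
    then show ?thesis
      using vs(1) last_in_set unfolding is_path_def by fastforce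
  qed
  ultimately show ?thesis
    using that by metis
qed

section \<open>Removing a pendant edge from the bunkbed graph\<close>

lemma bb_adj_sym: "bb_adj H S x y \<Longrightarrow> bb_adj H S y x"
  unfolding bb_adj_def by (auto simp: insert_commute)

lemma bb_connected_mono:
  assumes "bb_connected H S x y" "H \<subseteq> H'" "S \<subseteq> S'"
  shows "bb_connected H' S' x y"
proof -
  have "bb_adj H S a b \<longrightarrow> bb_adj H' S' a b" for a b
    using assms(2,3) unfolding bb_adj_def by auto
  then show ?thesis
    using assms(1) mono_rtranclp unfolding bb_connected_def by metis
qed

lemma bb_connected_no_edges: "bb_connected H {} x y \<Longrightarrow> fst x = fst y"
  unfolding bb_connected_def by (induction rule: rtranclp_induct) (auto simp: bb_adj_def)

lemma bb_adj_pendant: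
  assumes "pendant E l w" "S \<subseteq> E \<times> UNIV" "bb_adj H S a (l, c)" "fst a \<noteq> l"
  shows "a = (w, c) \<and> ({l, w}, c) \<in> S"
proof -
  have "({fst a, l}, c) \<in> S" "snd a = c"
    using assms(3,4) unfolding bb_adj_def by auto
  moreover from this have "{fst a, l} = {l, w}"
    using assms(1,2) unfolding pendant_def by auto
  ultimately show ?thesis
    using assms(4) by (cases a) (auto simp: doubleton_eq_iff insert_commute)
qed

lemma rtranclp_bb_adj_within_vertex:
  assumes "(\<lambda>s t. bb_adj H S s t \<and> fst s = l \<and> fst t = l)\<^sup>*\<^sup>* d d'"
  shows "d = d' \<or> fst d \<in> H"
  using assms by (induction rule: rtranclp_induct) (auto simp: bb_adj_def)

lemma rtranclp_bb_adj_remove_pendant: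
  fixes H :: "nat set"
  assumes pendant: "pendant E l w"
    and "bb_adj (if ({l, w}, True) \<in> S \<and> ({l, w}, False) \<in> S \<and> l \<in> H then insert w H else H)
           (S - {{l, w}} \<times> UNIV) a b"
  shows "(bb_adj H S)\<^sup>*\<^sup>* a b"
proof (cases "bb_adj H S a b")
  case False
  then have "fst a = fst b" "snd b = (\<not> snd a)" "fst a \<notin> H"
    "fst a \<in> (if ({l, w}, True) \<in> S \<and> ({l, w}, False) \<in> S \<and> l \<in> H then insert w H else H)"
    using assms(2) unfolding bb_adj_def by auto
  then have "a = (w, snd a)" "b = (w, \<not> snd a)" "l \<in> H" "({l, w}, c) \<in> S" for c
    by (cases a, cases b, cases c; auto split: if_splits)+
  moreover have "l \<noteq> w"
    using pendant unfolding pendant_def by blast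
  ultimately have "bb_adj H S a (l, snd a)" "bb_adj H S (l, snd a) (l, \<not> snd a)" "bb_adj H S (l, \<not> snd a) b"
    unfolding bb_adj_def by (metis fst_conv snd_conv insert_commute)+
  then show ?thesis
    by (blast intro: converse_rtranclp_into_rtranclp)
qed simp

text \<open>
  A walk enters and leaves the fibre of the pendant vertex l through w, and inside the fibre it
  can only change layer at a post at l; so the pendant edge acts as a post at w when both of its
  copies are open and l \<in> H, and is useless otherwise.
\<close>

lemma bb_connected_pendant:
  fixes H :: "nat set"
  assumes pendant: "pendant E l w" and "S \<subseteq> E \<times> UNIV" and "fst x \<noteq> l" "fst z \<noteq> l"
  defines "H' \<equiv> if ({l, w}, True) \<in> S \<and> ({l, w}, False) \<in> S \<and> l \<in> H then insert w H else H"
  shows "bb_connected H S x z \<longleftrightarrow> bb_connected H' (S - {{l, w}} \<times> UNIV) x z"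
proof
  assume "bb_connected H S x z"
  then show "bb_connected H' (S - {{l, w}} \<times> UNIV) x z"
    unfolding bb_connected_def
  proof (rule rtranclp_bypass_excursions[where D = "{s. fst s = l}"])
    fix a b assume out: "a \<notin> {s. fst s = l}" "b \<notin> {s. fst s = l}" and "bb_adj H S a b"
    moreover have "{fst a, fst b} \<noteq> {l, w}"
      using out by (auto simp: doubleton_eq_iff)
    moreover have "H \<subseteq> H'"
      unfolding H'_def by auto
    ultimately have "bb_adj H' (S - {{l, w}} \<times> UNIV) a b"
      unfolding bb_adj_def by auto
    then show "(bb_adj H' (S - {{l, w}} \<times> UNIV))\<^sup>*\<^sup>* a b" ..
  next
    fix a d d' b
    assume out: "a \<notin> {s. fst s = l}" "b \<notin> {s. fst s = l}" and inside: "d \<in> {s. fst s = l}" "d' \<in> {s. fst s = l}"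
      and "bb_adj H S a d" "bb_adj H S d' b"
      and within: "(\<lambda>s t. bb_adj H S s t \<and> s \<in> {s. fst s = l} \<and> t \<in> {s. fst s = l})\<^sup>*\<^sup>* d d'"
    obtain c c' where d: "d = (l, c)" "d' = (l, c')"
      using inside by (cases d, cases d') auto
    have a: "a = (w, c)" "({l, w}, c) \<in> S"
      using bb_adj_pendant[OF pendant \<open>S \<subseteq> E \<times> UNIV\<close>] \<open>bb_adj H S a d\<close> out d by auto
    have b: "b = (w, c')" "({l, w}, c') \<in> S"
      using bb_adj_pendant[OF pendant \<open>S \<subseteq> E \<times> UNIV\<close> bb_adj_sym] \<open>bb_adj H S d' b\<close> out d by auto
    have "c = c' \<or> l \<in> H"
      using rtranclp_bb_adj_within_vertex[of H S l d d'] within d by auto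
    then show "(bb_adj H' (S - {{l, w}} \<times> UNIV))\<^sup>*\<^sup>* a b"
    proof
      assume "l \<in> H"
      with a b have "c = c' \<or> bb_adj H' (S - {{l, w}} \<times> UNIV) a b"
        unfolding bb_adj_def H'_def by (cases c; cases c') auto
      then show ?thesis
        using a b by auto
    qed (use a b in simp)
  qed (use assms in auto)
next
  assume "bb_connected H' (S - {{l, w}} \<times> UNIV) x z"
  then have "(bb_adj H S)\<^sup>*\<^sup>*\<^sup>*\<^sup>* x z"
    using mono_rtranclp[of "bb_adj H' (S - {{l, w}} \<times> UNIV)" "(bb_adj H S)\<^sup>*\<^sup>*"]
      rtranclp_bb_adj_remove_pendant[OF pendant] unfolding bb_connected_def H'_def by blast
  then show "bb_connected H S x z"
    unfolding bb_connected_def by simp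
qed

lemma bb_connected_pendant_end:
  assumes pendant: "pendant E l w" and S: "S \<subseteq> E \<times> UNIV" and "fst x \<noteq> l" "l \<notin> H"
  shows "bb_connected H S x (l, c) \<longleftrightarrow> ({l, w}, c) \<in> S \<and> bb_connected H (S - {{l, w}} \<times> UNIV) x (w, c)"
proof
  have "l \<noteq> w"
    using pendant unfolding pendant_def by blast
  assume "bb_connected H S x (l, c)"
  then obtain y where y: "bb_connected H S x y" "bb_adj H S y (l, c)"
    using \<open>fst x \<noteq> l\<close> unfolding bb_connected_def by (metis fst_conv rtranclp.cases)
  have "fst y \<noteq> l"
    using y(2) \<open>l \<notin> H\<close> unfolding bb_adj_def by auto
  then have "y = (w, c)" "({l, w}, c) \<in> S"
    using bb_adj_pendant[OF pendant S y(2)] by auto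
  moreover have "bb_connected H (S - {{l, w}} \<times> UNIV) x (w, c)"
    using y(1) bb_connected_pendant[OF pendant S \<open>fst x \<noteq> l\<close>, of "(w, c)" H] \<open>l \<noteq> w\<close> \<open>l \<notin> H\<close> \<open>y = (w, c)\<close>
    by simp
  ultimately show "({l, w}, c) \<in> S \<and> bb_connected H (S - {{l, w}} \<times> UNIV) x (w, c)"
    by blast
next
  assume *: "({l, w}, c) \<in> S \<and> bb_connected H (S - {{l, w}} \<times> UNIV) x (w, c)"
  then have "bb_connected H S x (w, c)"
    by (blast intro: bb_connected_mono)
  moreover have "bb_adj H S (w, c) (l, c)"
    using * pendant unfolding bb_adj_def pendant_def by (auto simp: insert_commute)
  ultimately show "bb_connected H S x (l, c)"
    unfolding bb_connected_def by (rule rtranclp.rtrancl_into_rtrancl)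
qed

lemma bb_prob_eq_random_subset_prob:
  "bb_prob E H p x y = random_subset_prob (E \<times> UNIV) p (\<lambda>S. bb_connected H S x y)"
  by (simp add: bb_prob_def random_subset_prob_def)

lemma bb_prob_pendant:
  assumes "finite E" and pendant: "pendant E l w" and x: "fst x \<noteq> l" and y: "fst y \<noteq> l"
  shows "bb_prob E H p x y =
           (1 - p^2) * bb_prob (E - {{l, w}}) H p x y
         + p^2 * bb_prob (E - {{l, w}}) (if l \<in> H then insert w H else H) p x y"
proof -
  let ?e = "{l, w}" and ?E' = "E - {{l, w}}"
  let ?P = "random_subset_prob (?E' \<times> (UNIV :: bool set)) p"
  have "?e \<in> E"
    using pendant unfolding pendant_def by blast
  have reach: "bb_connected H (T \<union> S) x y \<longleftrightarrow>
      bb_connected (if (?e, True) \<in> T \<and> (?e, False) \<in> T \<and> l \<in> H then insert w H else H) S x y"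
    if "S \<subseteq> ?E' \<times> UNIV" "T \<subseteq> {?e} \<times> UNIV" for S T
  proof -
    have "T \<union> S \<subseteq> E \<times> UNIV" "T \<union> S - {?e} \<times> UNIV = S" "(?e, c) \<in> T \<union> S \<longleftrightarrow> (?e, c) \<in> T" for c
      using that \<open>?e \<in> E\<close> by auto
    then show ?thesis
      using bb_connected_pendant[OF pendant _ x y, of "T \<union> S" H] by simp
  qed
  have one_copy: "?P (\<lambda>S. bb_connected H (insert (?e, c) S) x y) = ?P (\<lambda>S. bb_connected H S x y)" for c
    by (rule random_subset_prob_cong) (use reach[of _ "{(?e, c)}"] in auto)
  have both_copies: "?P (\<lambda>S. bb_connected H (insert (?e, True) (insert (?e, False) S)) x y)
      = ?P (\<lambda>S. bb_connected (if l \<in> H then insert w H else H) S x y)"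
    by (rule random_subset_prob_cong) (use reach[of _ "{(?e, True), (?e, False)}"] in auto)
  show ?thesis
    unfolding bb_prob_eq_random_subset_prob random_subset_prob_edge_copies[OF \<open>finite E\<close> \<open>?e \<in> E\<close>]
      one_copy both_copies
    by (simp add: power2_eq_square algebra_simps)
qed

lemma bb_prob_pendant_end:
  assumes "finite E" and pendant: "pendant E l w" and x: "fst x \<noteq> l" and "l \<notin> H"
  shows "bb_prob E H p x (l, c) = p * bb_prob (E - {{l, w}}) H p x (w, c)"
proof -
  let ?e = "{l, w}" and ?E' = "E - {{l, w}}"
  let ?P = "random_subset_prob (?E' \<times> (UNIV :: bool set)) p"
  have "?e \<in> E"
    using pendant unfolding pendant_def by blast
  have reach_end: "bb_connected H (T \<union> S) x (l, c) \<longleftrightarrow> (?e, c) \<in> T \<and> bb_connected H S x (w, c)"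
    if "S \<subseteq> ?E' \<times> UNIV" "T \<subseteq> {?e} \<times> UNIV" for S T
  proof -
    have "T \<union> S \<subseteq> E \<times> UNIV" "T \<union> S - {?e} \<times> UNIV = S"
      using that \<open>?e \<in> E\<close> by auto
    then show ?thesis
      using bb_connected_pendant_end[OF pendant _ x \<open>l \<notin> H\<close>, of "T \<union> S" c] that by auto
  qed
  have no_copy: "?P (\<lambda>S. bb_connected H S x (l, c)) = ?P (\<lambda>S. False)"
    by (rule random_subset_prob_cong) (use reach_end[of _ "{}"] in auto)
  have one_copy: "?P (\<lambda>S. bb_connected H (insert (?e, d) S) x (l, c))
      = ?P (\<lambda>S. d = c \<and> bb_connected H S x (w, c))" for d
    by (rule random_subset_prob_cong) (use reach_end[of _ "{(?e, d)}"] in auto)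
  have both_copies: "?P (\<lambda>S. bb_connected H (insert (?e, True) (insert (?e, False) S)) x (l, c))
      = ?P (\<lambda>S. bb_connected H S x (w, c))"
    by (rule random_subset_prob_cong) (use reach_end[of _ "{(?e, True), (?e, False)}"] in auto)
  show ?thesis
    unfolding bb_prob_eq_random_subset_prob random_subset_prob_edge_copies[OF \<open>finite E\<close> \<open>?e \<in> E\<close>]
      no_copy one_copy both_copies
    by (cases c) (simp_all add: power2_eq_square algebra_simps)
qed

lemma bb_prob_post:
  assumes "v \<in> H"
  shows "bb_prob E H p x (v, b) = bb_prob E H p x (v, c)"
proof -
  have "bb_connected H S x (v, b) \<longleftrightarrow> bb_connected H S x (v, c)" for S b c
  proof -
    have "bb_adj H S (v, b') (v, c')" if "b' \<noteq> c'" for b' c'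
      using assms that unfolding bb_adj_def by simp
    then show ?thesis
      unfolding bb_connected_def by (metis rtranclp.rtrancl_into_rtrancl)
  qed
  then show ?thesis
    unfolding bb_prob_eq_random_subset_prob by (blast intro: random_subset_prob_cong)
qed

lemma bb_prob_opposite_layer_le:
  assumes "forest_on n E" "0 \<le> p" "p \<le> 1"
  shows "bb_prob E H p (u, True) (v, False) \<le> bb_prob E H p (u, True) (v, True)"
  using assms(1)
proof (induction "card E" arbitrary: E H v rule: less_induct)
  case less
  consider "v \<in> H" | "E = {}" | l w where "pendant E l w" "l \<noteq> u" "v \<notin> H"
    using forest_pendant_other_than[OF less.prems] by metis
  then show ?case
  proof cases
    case 1
    then show ?thesis
      using bb_prob_post[of v H E p "(u, True)" False True] by simp
  next
    case 2
    show ?thesis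
      unfolding bb_prob_eq_random_subset_prob
    proof (rule random_subset_prob_mono[OF _ assms(2,3)])
      fix S :: "(nat set \<times> bool) set"
      assume "S \<subseteq> E \<times> UNIV" "bb_connected H S (u, True) (v, False)"
      then have "u = v"
        using \<open>E = {}\<close> bb_connected_no_edges by fastforce
      then show "bb_connected H S (u, True) (v, True)"
        by (simp add: bb_connected_def)
    qed
  next
    case (3 l w)
    then have pendant: "pendant E l w"
      by blast
    have "finite E"
      using less.prems by (rule forest_finite)
    have IH: "bb_prob (E - {{l, w}}) H' p (u, True) (v', False) \<le> bb_prob (E - {{l, w}}) H' p (u, True) (v', True)"
      for H' v'
    proof (rule less.hyps)
      show "card (E - {{l, w}}) < card E"
        using pendant unfolding pendant_def by (intro card_Diff1_less[OF \<open>finite E\<close>]) blast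
      show "forest_on n (E - {{l, w}})"
        using less.prems by (rule forest_subset) blast
    qed
    show ?thesis
    proof (cases "v = l")
      case True
      then show ?thesis
        using bb_prob_pendant_end[OF \<open>finite E\<close> pendant] IH[of H w] 3 assms(2)
        by (simp add: mult_left_mono)
    next
      case False
      have "0 \<le> 1 - p^2"
        using assms(2,3) by (simp add: power_le_one)
      then show ?thesis
        using bb_prob_pendant[OF \<open>finite E\<close> pendant] IH 3 False
        by (simp add: add_mono mult_left_mono)
    qed
  qed
qed

theorem mainTheorem1:
  fixes n :: nat and E :: "nat set set" and H :: "nat set" and p :: real and u v :: nat
  assumes "forest_on n E"
    and "H \<subseteq> {1..n}"
    and "0 < p" and "p < 1"
    and "u \<in> {1..n}" and "v \<in> {1..n}"
  shows "bb_prob E H p (u, True) (v, True) \<ge> bb_prob E H p (u, True) (v, False)"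
  using bb_prob_opposite_layer_le[OF assms(1)] assms(3,4) by simp

end
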